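(* For every positive integer $s$ and all integers $i\ge 0$ and $j$, the number $h_{s,i,j}$ defined in the context is an integer.
   Context: For a fixed positive integer $s$, the numbers $h_{s,i,j}$ (integers $i\ge 0$, $j$) are defined recursively by: $h_{s,i,j}=0$ if $j\le i$; for $i=0$ and $j\ge 1$, $h_{s,0,j}=\binom{s+j-1}{j}\frac{s-j}{s}$; for $i>0$ and $j>i$, $h_{s,i,j}=-\frac{s-j+1}{i}h_{s,i-1,j-1}-\frac{j-i}{i}h_{s,i-1,j}$. *)

theory Defs
  imports Complex_Main
begin

fun h :: "nat \<Rightarrow> nat \<Rightarrow> int \<Rightarrow> rat" where
  "h s 0 j =
     (if j \<le> 0 then 0
      else of_nat ((s + nat j - 1) choose (nat j)) * of_int (int s - j) / of_nat s)"
| "h s (Suc i) j =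
     (if j \<le> int (Suc i) then 0
      else - (of_int (int s - j + 1) / of_nat (Suc i)) * h s i (j - 1)
           - (of_int (j - int (Suc i)) / of_nat (Suc i)) * h s i j)"

end

theory Submission
  imports Defs "HOL-Computational_Algebra.Formal_Power_Series"
begin

(*
  Let H_i = sum_n h_{s,i,n} x^n.  The recursion says (i + 1) H_{i+1} = (i + 1) H_i - L_s H_i for the
  operator L_a f = a x f + x (1 - x) f', and multiplying by (1 - x)^(s+1) turns L_s into L_{2s+1}.
  The polynomials x^m (1 - x)^(2s+1-m), m <= 2s + 1, are eigenvectors of L_{2s+1} with eigenvalue m,
  and (1 - x)^(s+1) H_0 = 1 - 2x - (1 - x)^(s+1) is an integer combination of them.  So
  (1 - x)^(s+1) H_i is the same combination with its m-th coefficient multiplied by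
  prod_{k=1..i} (1 - m/k) = binomial(i - m, i), an integer.  Dividing by (1 - x)^(s+1), i.e.
  multiplying by sum_n binomial(s + n, n) x^n, keeps all coefficients integral.
*)

definition fps_Ints :: "'a::comm_ring_1 fps \<Rightarrow> bool" where
  "fps_Ints f \<longleftrightarrow> (\<forall>n. fps_nth f n \<in> \<int>)"

lemma fps_Ints_const: "c \<in> \<int> \<Longrightarrow> fps_Ints (fps_const c)"
  by (simp add: fps_Ints_def)

lemma fps_Ints_X: "fps_Ints fps_X"
  by (simp add: fps_Ints_def)

lemma fps_Ints_diff: "fps_Ints f \<Longrightarrow> fps_Ints g \<Longrightarrow> fps_Ints (f - g)"
  by (simp add: fps_Ints_def Ints_diff)

lemma fps_Ints_mult: "fps_Ints f \<Longrightarrow> fps_Ints g \<Longrightarrow> fps_Ints (f * g)"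
  by (auto simp: fps_Ints_def fps_mult_nth intro!: Ints_sum Ints_mult)

lemma fps_Ints_power: "fps_Ints f \<Longrightarrow> fps_Ints (f ^ n)"
  by (induction n) (simp_all add: fps_Ints_mult fps_Ints_const flip: fps_const_1_eq_1)

lemma fps_Ints_sum: "(\<And>x. x \<in> A \<Longrightarrow> fps_Ints (f x)) \<Longrightarrow> fps_Ints (\<Sum>x\<in>A. f x)"
  by (simp add: fps_Ints_def fps_sum_nth Ints_sum)

lemma fps_Ints_inverse_one_minus_X_power:
  "fps_Ints (inverse ((1 - fps_X) ^ n :: 'a::field_char_0 fps))"
proof (cases "n = 0")
  case False
  then show ?thesis
    using one_minus_const_fps_X_neg_power'[of n "1 :: 'a"] by (simp add: fps_Ints_def)
qed (simp add: fps_Ints_def)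

definition L_op :: "nat \<Rightarrow> 'a::comm_ring_1 fps \<Rightarrow> 'a fps" where
  "L_op N f = of_nat N * fps_X * f + fps_X * (1 - fps_X) * fps_deriv f"

lemma fps_nth_L_op:
  "fps_nth (L_op a f) n = (if n = 0 then 0 else
     (of_nat a - of_nat n + 1) * fps_nth f (n - 1) + of_nat n * fps_nth (f :: 'a::comm_ring_1 fps) n)"
proof -
  have L_op_eq: "L_op a f = of_nat a * fps_X * f + fps_X * fps_deriv f - fps_X * (fps_X * fps_deriv f)"
    by (simp add: L_op_def algebra_simps)
  show ?thesis
  proof (cases n)
    case (Suc k)
    then show ?thesis
      unfolding L_op_eq by (cases k) (auto simp: algebra_simps)
  qed (simp add: L_op_eq)
qed

lemma L_op_sum: "L_op N (\<Sum>x\<in>A. f x) = (\<Sum>x\<in>A. L_op N (f x :: 'a::comm_ring_1 fps))"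
  by (simp add: L_op_def fps_deriv_sum sum_distrib_left sum.distrib)

lemma L_op_const_mult: "L_op N (fps_const c * f) = fps_const c * L_op N (f :: 'a::comm_ring_1 fps)"
  by (simp add: L_op_def algebra_simps)

lemma fps_X_mult_deriv_X_power:
  "fps_X * fps_deriv (fps_X ^ m :: 'a::comm_ring_1 fps) = of_nat m * fps_X ^ m"
proof (cases m)
  case (Suc k)
  then show ?thesis
    using fps_deriv_power'[of "fps_X :: 'a fps" m] by (simp add: mult.left_commute)
qed simp

lemma one_minus_X_mult_deriv_power:
  "(1 - fps_X) * fps_deriv ((1 - fps_X) ^ n :: 'a::comm_ring_1 fps) = - of_nat n * (1 - fps_X) ^ n"
proof (cases n)
  case (Suc k)
  then show ?thesis
    using fps_deriv_power'[of "1 - fps_X :: 'a fps" n] by (simp add: mult.left_commute)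
qed simp

lemma one_minus_X_power_mult_L_op:
  "(1 - fps_X) ^ c * L_op a f = L_op (a + c) ((1 - fps_X) ^ c * f :: 'a::comm_ring_1 fps)"
proof -
  have "L_op (a + c) ((1 - fps_X) ^ c * f :: 'a fps) = of_nat (a + c) * fps_X * ((1 - fps_X) ^ c * f)
      + fps_X * f * ((1 - fps_X) * fps_deriv ((1 - fps_X) ^ c))
      + (1 - fps_X) ^ c * (fps_X * (1 - fps_X) * fps_deriv f)"
    by (simp add: L_op_def algebra_simps)
  also have "\<dots> = (1 - fps_X) ^ c * L_op a f"
    unfolding one_minus_X_mult_deriv_power by (simp add: L_op_def algebra_simps)
  finally show ?thesis ..
qed

definition bern :: "nat \<Rightarrow> nat \<Rightarrow> 'a::comm_ring_1 fps" where
  "bern N m = fps_X ^ m * (1 - fps_X) ^ (N - m)"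

lemma fps_Ints_bern: "fps_Ints (bern N m)"
  unfolding bern_def
  by (intro fps_Ints_mult fps_Ints_power fps_Ints_diff fps_Ints_X) (simp add: fps_Ints_def)

lemma L_op_bern:
  assumes "m \<le> N"
  shows "L_op N (bern N m :: 'a::comm_ring_1 fps) = of_nat m * bern N m"
proof -
  define n where "n = N - m"
  have N: "(of_nat N :: 'a fps) = of_nat m + of_nat n"
    using assms by (simp add: n_def flip: of_nat_add)
  have "L_op N (bern N m :: 'a fps) = of_nat N * fps_X * bern N m
      + (1 - fps_X) * (1 - fps_X) ^ n * (fps_X * fps_deriv (fps_X ^ m))
      + fps_X * fps_X ^ m * ((1 - fps_X) * fps_deriv ((1 - fps_X) ^ n))"
    by (simp add: L_op_def bern_def n_def algebra_simps)
  also have "\<dots> = (of_nat N * fps_X + of_nat m * (1 - fps_X) - of_nat n * fps_X) * bern N m"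
    unfolding fps_X_mult_deriv_X_power one_minus_X_mult_deriv_power
    by (simp add: bern_def n_def algebra_simps)
  also have "\<dots> = of_nat m * bern N m"
    by (simp add: N algebra_simps)
  finally show ?thesis .
qed

lemma L_op_sum_bern:
  "L_op N (\<Sum>m\<le>N. fps_const (c m) * bern N m :: 'a::comm_ring_1 fps) =
   (\<Sum>m\<le>N. fps_const (of_nat m * c m) * bern N m)"
  unfolding L_op_sum L_op_const_mult
  by (intro sum.cong) (simp_all add: L_op_bern fps_eq_iff algebra_simps flip: fps_of_nat)

(* (i - m gchoose i) is the product of the eigenvalues 1 - m/k, k = 1..i, of the steps
   F k \<mapsto> F (Suc k) on the m-th eigenvector. *)

lemma L_op_flow:
  fixes F :: "nat \<Rightarrow> 'a::field_char_0 fps"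
  assumes step: "\<And>i. of_nat (Suc i) * F (Suc i) = of_nat (Suc i) * F i - L_op N (F i)"
    and init: "F 0 = (\<Sum>m\<le>N. fps_const (c m) * bern N m)"
  shows "F i = (\<Sum>m\<le>N. fps_const (((of_nat i - of_nat m) gchoose i) * c m) * bern N m)"
proof (induction i)
  case 0
  show ?case using init by simp
next
  case (Suc i)
  have absorb: "(of_nat (Suc i) - of_nat m) * ((of_nat i - of_nat m) gchoose i) =
      of_nat (Suc i) * ((of_nat (Suc i) - of_nat m :: 'a) gchoose Suc i)" for m
    using gbinomial_absorption[of i "of_nat (Suc i) - of_nat m :: 'a"] by simp
  have "of_nat (Suc i) * F (Suc i) =
      (\<Sum>m\<le>N. fps_const ((of_nat (Suc i) - of_nat m) * ((of_nat i - of_nat m) gchoose i) * c m) * bern N m)"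
    unfolding step Suc.IH L_op_sum_bern sum_distrib_left sum_subtractf[symmetric]
    by (intro sum.cong) (simp_all add: fps_eq_iff algebra_simps flip: fps_of_nat)
  also have "\<dots> =
      (\<Sum>m\<le>N. fps_const (of_nat (Suc i) * ((of_nat (Suc i) - of_nat m) gchoose (Suc i)) * c m) * bern N m)"
    by (simp only: absorb)
  also have "\<dots> = of_nat (Suc i) *
      (\<Sum>m\<le>N. fps_const (((of_nat (Suc i) - of_nat m) gchoose (Suc i)) * c m) * bern N m)"
    unfolding sum_distrib_left
    by (intro sum.cong) (simp_all add: fps_eq_iff algebra_simps flip: fps_of_nat)
  finally show ?case
    by (simp del: of_nat_Suc)
qed

definition bern_Ints_span :: "nat \<Rightarrow> 'a::comm_ring_1 fps set" where
  "bern_Ints_span N = {\<Sum>m\<le>N. fps_const (c m) * bern N m | c. \<forall>m. c m \<in> \<int>}"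

lemma bern_Ints_spanI:
  "(\<And>m. c m \<in> \<int>) \<Longrightarrow> (\<Sum>m\<le>N. fps_const (c m) * bern N m) \<in> bern_Ints_span N"
  unfolding bern_Ints_span_def by blast

lemma fps_Ints_bern_Ints_span: "f \<in> bern_Ints_span N \<Longrightarrow> fps_Ints f"
  unfolding bern_Ints_span_def
  by (auto intro!: fps_Ints_sum fps_Ints_mult fps_Ints_const fps_Ints_bern)

lemma bern_Ints_span_diff:
  assumes "f \<in> bern_Ints_span N" "g \<in> bern_Ints_span N"
  shows "f - g \<in> bern_Ints_span N"
proof -
  obtain c d where "\<forall>m. c m \<in> \<int>" "\<forall>m. d m \<in> \<int>"
    and "f = (\<Sum>m\<le>N. fps_const (c m) * bern N m)" "g = (\<Sum>m\<le>N. fps_const (d m) * bern N m)"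
    using assms unfolding bern_Ints_span_def by blast
  then have "f - g = (\<Sum>m\<le>N. fps_const (c m - d m) * bern N m)"
    by (simp only: sum_subtractf[symmetric] left_diff_distrib[symmetric] fps_const_sub)
  then show ?thesis
    using \<open>\<forall>m. c m \<in> \<int>\<close> \<open>\<forall>m. d m \<in> \<int>\<close> by (simp add: bern_Ints_spanI)
qed

lemma X_power_mult_one_minus_X_power_in_bern_Ints_span:
  assumes "a + b \<le> N"
  shows "fps_X ^ a * (1 - fps_X) ^ b \<in> (bern_Ints_span N :: 'a::comm_ring_1 fps set)"
proof -
  define d where "d = N - (a + b)"
  let ?c = "\<lambda>m. if m \<in> (+) a ` {..d} then of_nat (d choose (m - a)) else (0 :: 'a)"
  have "fps_X ^ a * (1 - fps_X) ^ b = fps_X ^ a * (1 - fps_X) ^ b * (fps_X + (1 - fps_X :: 'a fps)) ^ d"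
    by simp
  also have "\<dots> = (\<Sum>k\<le>d. fps_const (of_nat (d choose k)) * bern N (a + k))"
  proof -
    have "(1 - fps_X) ^ (N - (a + k)) = (1 - fps_X) ^ b * ((1 - fps_X) ^ (d - k) :: 'a fps)" if "k \<le> d" for k
      using assms that by (simp add: d_def flip: power_add)
    then show ?thesis
      unfolding binomial_ring sum_distrib_left
      by (intro sum.cong) (simp_all add: bern_def power_add mult_ac flip: fps_of_nat)
  qed
  also have "\<dots> = (\<Sum>m\<in>(+) a ` {..d}. fps_const (of_nat (d choose (m - a))) * bern N m)"
    by (simp add: sum.reindex)
  also have "\<dots> = (\<Sum>m\<le>N. fps_const (?c m) * bern N m)"
  proof -
    have "{..N} \<inter> (+) a ` {..d} = (+) a ` {..d}"
      using assms by (auto simp: d_def)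
    moreover have "fps_const (?c m) * bern N m =
        (if m \<in> (+) a ` {..d} then fps_const (of_nat (d choose (m - a))) * bern N m else 0)" for m
      by simp
    ultimately show ?thesis
      using sum.inter_restrict[of "{..N}" "\<lambda>m. fps_const (of_nat (d choose (m - a))) * bern N m" "(+) a ` {..d}"]
      by simp
  qed
  finally show ?thesis
    by (simp add: bern_Ints_spanI)
qed

lemma gbinomial_of_int_Ints: "(of_int k gchoose n :: 'a::field_char_0) \<in> \<int>"
proof (cases "k \<ge> 0")
  case True
  then have "(of_int k gchoose n :: 'a) = of_nat (nat k choose n)"
    by (simp add: binomial_gbinomial)
  then show ?thesis by simp
next
  case False
  then have "(of_int k gchoose n :: 'a) = (-1) ^ n * of_nat ((nat (- k) + n - 1) choose n)"
    using gbinomial_minus[of "of_nat (nat (- k)) :: 'a" n] by (simp add: binomial_gbinomial of_nat_diff)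
  then show ?thesis by simp
qed

lemma L_op_flow_bern_Ints_span:
  fixes F :: "nat \<Rightarrow> 'a::field_char_0 fps"
  assumes "\<And>i. of_nat (Suc i) * F (Suc i) = of_nat (Suc i) * F i - L_op N (F i)"
    and "F 0 \<in> bern_Ints_span N"
  shows "F i \<in> bern_Ints_span N"
proof -
  obtain c where c: "\<forall>m. c m \<in> \<int>" "F 0 = (\<Sum>m\<le>N. fps_const (c m) * bern N m)"
    using assms(2) unfolding bern_Ints_span_def by blast
  have "((of_nat i - of_nat m :: 'a) gchoose i) \<in> \<int>" for m
    using gbinomial_of_int_Ints[of "int i - int m" i] by simp
  then show ?thesis
    unfolding L_op_flow[OF assms(1) c(2)] using c(1) by (intro bern_Ints_spanI Ints_mult) auto
qed

lemma h_eq_0: "j \<le> int i \<Longrightarrow> h s i j = 0"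
  by (cases i) auto

lemma h_Suc:
  "h s (Suc i) j = - (of_int (int s - j + 1) / of_nat (Suc i)) * h s i (j - 1)
                   - (of_int (j - int (Suc i)) / of_nat (Suc i)) * h s i j"
proof (cases "j \<le> int (Suc i)")
  case True
  then have "h s i (j - 1) = 0" and "j = int (Suc i) \<or> h s i j = 0"
    by (auto intro: h_eq_0)
  then show ?thesis using True by auto
qed simp

definition h_fps :: "nat \<Rightarrow> nat \<Rightarrow> rat fps" where
  "h_fps s i = Abs_fps (\<lambda>n. h s i (int n))"

lemma h_fps_Suc: "of_nat (Suc i) * h_fps s (Suc i) = of_nat (Suc i) * h_fps s i - L_op s (h_fps s i)"
proof (rule fps_ext)
  fix n
  have cancel: "d * (- (x / d) * A - (y / d) * B) = - x * A - y * B" if "d \<noteq> 0" for d x y A B :: rat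
    using that by (simp add: field_simps)
  have "of_nat (Suc i) * h s (Suc i) (int n) =
      of_nat (Suc i) * h s i (int n) - (of_int (int s - int n + 1) * h s i (int n - 1) + of_nat n * h s i (int n))"
    unfolding h_Suc cancel[OF of_nat_neq_0] by (simp add: algebra_simps del: h.simps)
  then show "fps_nth (of_nat (Suc i) * h_fps s (Suc i)) n = fps_nth (of_nat (Suc i) * h_fps s i - L_op s (h_fps s i)) n"
    by (cases n) (simp_all add: fps_nth_L_op h_fps_def h_eq_0 del: h.simps flip: fps_of_nat)
qed

lemma one_minus_X_power_mult_h_fps_Suc:
  "of_nat (Suc i) * ((1 - fps_X) ^ (s + 1) * h_fps s (Suc i)) =
   of_nat (Suc i) * ((1 - fps_X) ^ (s + 1) * h_fps s i) - L_op (2 * s + 1) ((1 - fps_X) ^ (s + 1) * h_fps s i)"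
proof -
  have conj: "(1 - fps_X) ^ (s + 1) * L_op s f = L_op (2 * s + 1) ((1 - fps_X) ^ (s + 1) * f)" for f
    using one_minus_X_power_mult_L_op[of "s + 1" s f] by (simp add: mult_2)
  have "(1 - fps_X) ^ (s + 1) * (of_nat (Suc i) * h_fps s (Suc i)) =
      (1 - fps_X) ^ (s + 1) * (of_nat (Suc i) * h_fps s i - L_op s (h_fps s i))"
    by (simp only: h_fps_Suc)
  then show ?thesis
    by (simp only: right_diff_distrib conj mult.left_commute[of "(1 - fps_X) ^ (s + 1)"])
qed

lemma one_minus_X_power_mult_h_fps_0:
  assumes "s > 0"
  shows "(1 - fps_X) ^ (s + 1) * h_fps s 0 = 1 - 2 * fps_X - (1 - fps_X) ^ (s + 1)"
proof -
  define W where "W = inverse ((1 - fps_X) ^ (s + 1) :: rat fps)"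
  have W_nth: "fps_nth W n = of_nat ((s + n) choose n)" for n
    using one_minus_const_fps_X_neg_power'[of "s + 1" "1 :: rat"] by (simp add: W_def)
  have "h_fps s 0 = (1 - 2 * fps_X) * W - 1"
  proof (rule fps_ext)
    fix n
    have eq: "(1 - 2 * fps_X) * W - 1 = W - fps_const 2 * (fps_X * W) - 1"
      by (simp add: algebra_simps numeral_fps_const)
    show "fps_nth (h_fps s 0) n = fps_nth ((1 - 2 * fps_X) * W - 1) n"
    proof (cases n)
      case 0
      then show ?thesis by (simp add: eq h_fps_def W_nth)
    next
      case (Suc k)
      have "s * ((s + k) choose k) = Suc k * ((s + k) choose Suc k)"
        using binomial_absorption[of k "s + k"] binomial_absorb_comp[of "s + k" k] by simp
      then have "rat_of_nat s * of_nat ((s + k) choose k) = of_nat (Suc k) * of_nat ((s + k) choose Suc k)"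
        by (metis of_nat_mult)
      then have "of_nat ((s + k) choose Suc k) * of_int (int s - int (Suc k)) / of_nat s =
          of_nat ((s + Suc k) choose Suc k) - 2 * (of_nat ((s + k) choose k) :: rat)"
        using assms by (simp add: field_simps)
      then show ?thesis
        using Suc by (simp add: eq h_fps_def W_nth nat_add_distrib)
    qed
  qed
  moreover have "(1 - fps_X) ^ (s + 1) * W = 1"
    unfolding W_def by (rule inverse_mult_eq_1') simp
  ultimately show ?thesis
    by (simp only: right_diff_distrib mult.left_commute[of "(1 - fps_X) ^ (s + 1)"] mult_1_right)
qed

lemma h_fps_0_in_bern_Ints_span:
  assumes "s > 0"
  shows "(1 - fps_X) ^ (s + 1) * h_fps s 0 \<in> bern_Ints_span (2 * s + 1)"
proof -
  have "1 - 2 * fps_X - (1 - fps_X) ^ (s + 1) =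
      fps_X ^ 0 * (1 - fps_X) ^ 1 - fps_X ^ 1 * (1 - fps_X) ^ 0 - fps_X ^ 0 * (1 - fps_X :: rat fps) ^ (s + 1)"
    by simp
  then show ?thesis
    unfolding one_minus_X_power_mult_h_fps_0[OF assms]
    by (simp only:) (intro bern_Ints_span_diff X_power_mult_one_minus_X_power_in_bern_Ints_span; simp)
qed

theorem corollary7:
  fixes s i :: nat and j :: int
  assumes "s > 0"
  shows "h s i j \<in> \<int>"
proof (cases "j < 0")
  case True
  then show ?thesis by (simp add: h_eq_0)
next
  case False
  then obtain n where j: "j = int n"
    using nonneg_int_cases by (metis not_less)
  define F where "F i = (1 - fps_X) ^ (s + 1) * h_fps s i" for i
  have "F i \<in> bern_Ints_span (2 * s + 1)"
    using one_minus_X_power_mult_h_fps_Suc h_fps_0_in_bern_Ints_span[OF assms] unfolding F_def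
    by (rule L_op_flow_bern_Ints_span)
  then have "fps_Ints (inverse ((1 - fps_X) ^ (s + 1)) * F i)"
    by (intro fps_Ints_mult fps_Ints_inverse_one_minus_X_power fps_Ints_bern_Ints_span)
  moreover have "inverse ((1 - fps_X) ^ (s + 1)) * F i = h_fps s i"
    unfolding F_def mult.assoc[symmetric] by (subst inverse_mult_eq_1) simp_all
  ultimately show ?thesis
    by (simp add: fps_Ints_def h_fps_def j)
qed

end
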